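(* Every top-choice social choice function is pseudomonotone, and hence for every $\varepsilon>0$ there is a lex-truthful randomized mechanism that $\varepsilon$-implements it.
   Context: Setting: agents $N=\{1,\dots,n\}$, finite outcome set $O$, each agent $j$ has a set $\Sigma_j$ of allowed strict total orders on $O$, $\Sigma=\prod_j\Sigma_j$; $\succ(1)$ denotes the top outcome of $\succ$ and $\mathrm{pos}_\succ(o)$ the position of $o$. A social choice function $f:\Sigma\to O$ is top-choice if $f(\succ)=g(\succ_1(1),\dots,\succ_n(1))$ for some $g:O^n\to O$ such that for all $j$, all $o_{-j}\in O^{n-1}$ and all $o\in O$: if $g(o,o_{-j})=o'$ then $g(o',o_{-j})=o'$ (here $o$ is in coordinate $j$). $f$ is pseudomonotone if for every $j$, $\succ_{-j}$, $\succ_j,\succ'_j\in\Sigma_j$, with $o=f(\succ_j,\succ_{-j})$, $o'=f(\succ'_j,\succ_{-j})$: either $o=o'$ or $o\succ_j o'$, or there is $o''$ with $o''\succ_j o'$ and $\mathrm{pos}_{\succ_j}(o'')<\mathrm{pos}_{\succ'_j}(o'')$. A randomized mechanism $\varepsilon$-implements $f$ if $\Pr[\mathcal{M}(\succ)=f(\succ)]\ge1-\varepsilon$ for all $\succ$. For lotteries $p\ne q$, $p$ lex-dominates $q$ w.r.t. $\succ$ if at the first position $i$ (in the order $\succ$) where $p(\succ(i))\ne q(\succ(i))$ we have $p(\succ(i))>q(\succ(i))$. $\mathcal{M}$ is lex-truthful if for all $j,\succ_j,\succ'_j,\succ_{-j}$, either $\mathcal{M}(\succ_j,\succ_{-j})=\mathcal{M}(\succ'_j,\succ_{-j})$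 or the former lex-dominates the latter w.r.t. $\succ_j$. *)

theory Defs
  imports "HOL-Probability.Probability_Mass_Function"
begin

text \<open>A strict total order on the outcomes is represented by a list enumerating
  all outcomes without repetition, best first: the top outcome is hd,
  the (0-based) position of an outcome is its index.\<close>

definition is_order :: "'o list \<Rightarrow> bool" where
  "is_order xs \<longleftrightarrow> distinct xs \<and> set xs = UNIV"

definition top :: "'o list \<Rightarrow> 'o" where
  "top xs = hd xs"

definition pos :: "'o list \<Rightarrow> 'o \<Rightarrow> nat" where
  "pos xs a = (LEAST i. i < length xs \<and> xs ! i = a)"

definition prefers :: "'o list \<Rightarrow> 'o \<Rightarrow> 'o \<Rightarrow> bool" where
  "prefers xs a b \<longleftrightarrow> pos xs a < pos xs b"

definition valid_domain :: "('a \<Rightarrow> 'o list set) \<Rightarrow> bool" where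
  "valid_domain Sig \<longleftrightarrow> (\<forall>j. \<forall>xs\<in>Sig j. is_order xs)"

definition profiles :: "('a \<Rightarrow> 'o list set) \<Rightarrow> ('a \<Rightarrow> 'o list) set" where
  "profiles Sig = {P. \<forall>j. P j \<in> Sig j}"

definition top_choice ::
  "('a \<Rightarrow> 'o list set) \<Rightarrow> (('a \<Rightarrow> 'o list) \<Rightarrow> 'o) \<Rightarrow> bool" where
  "top_choice Sig f \<longleftrightarrow>
     (\<exists>g :: ('a \<Rightarrow> 'o) \<Rightarrow> 'o.
        (\<forall>P\<in>profiles Sig. f P = g (\<lambda>j. top (P j))) \<and>
        (\<forall>j (v :: 'a \<Rightarrow> 'o) a b. g (v(j := a)) = b \<longrightarrow> g (v(j := b)) = b))"

definition pseudomonotone ::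
  "('a \<Rightarrow> 'o list set) \<Rightarrow> (('a \<Rightarrow> 'o list) \<Rightarrow> 'o) \<Rightarrow> bool" where
  "pseudomonotone Sig f \<longleftrightarrow>
     (\<forall>j. \<forall>P\<in>profiles Sig. \<forall>xs'\<in>Sig j.
        (let a = f P; b = f (P(j := xs')) in
          a = b \<or> prefers (P j) a b \<or>
          (\<exists>c. prefers (P j) c b \<and> pos (P j) c < pos xs' c)))"

definition lex_dom :: "'o list \<Rightarrow> 'o pmf \<Rightarrow> 'o pmf \<Rightarrow> bool" where
  "lex_dom xs p q \<longleftrightarrow> p \<noteq> q \<and>
     (\<exists>i<length xs. (\<forall>k<i. pmf p (xs ! k) = pmf q (xs ! k)) \<and>
                    pmf p (xs ! i) > pmf q (xs ! i))"

definition lex_truthful ::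
  "('a \<Rightarrow> 'o list set) \<Rightarrow> (('a \<Rightarrow> 'o list) \<Rightarrow> 'o pmf) \<Rightarrow> bool" where
  "lex_truthful Sig M \<longleftrightarrow>
     (\<forall>j. \<forall>P\<in>profiles Sig. \<forall>xs'\<in>Sig j.
        M P = M (P(j := xs')) \<or> lex_dom (P j) (M P) (M (P(j := xs'))))"

definition eps_implements ::
  "('a \<Rightarrow> 'o list set) \<Rightarrow> real \<Rightarrow> (('a \<Rightarrow> 'o list) \<Rightarrow> 'o pmf) \<Rightarrow> (('a \<Rightarrow> 'o list) \<Rightarrow> 'o) \<Rightarrow> bool" where
  "eps_implements Sig \<epsilon> M f \<longleftrightarrow> (\<forall>P\<in>profiles Sig. pmf (M P) (f P) \<ge> 1 - \<epsilon>)"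

end

theory Submission imports Defs begin

text \<open>
  If a top-choice rule changes its outcome when agent j deviates from an order with top
  t, then the deviation moves t off the top and the new outcome is not t (otherwise the
  idempotence condition on g would give back the old outcome). So t itself witnesses
  pseudomonotonicity.

  For the mechanism, output f P with probability 1 - e; with probability e pick an agent
  uniformly and draw an outcome from that agent's order with weights strictly decreasing
  in the rank. A deviation of j changes the lottery by a positive multiple of the
  difference of j's two rank lotteries plus 1 - e times the difference of the two point
  masses at the outcomes of f. If f does not change, the rank lottery of the true order
  wins at the first rank where the orders differ; if f changes, both terms favour the
  true top outcome.
\<close>

lemma length_order: "is_order (xs :: 'o::finite list) \<Longrightarrow> length xs = CARD('o)"
  unfolding is_order_def by (metis distinct_card)

lemma pos_nth:
  assumes "is_order xs" "i < length xs"
  shows "pos xs (xs ! i) = i"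
  unfolding pos_def
proof (rule Least_equality)
  fix k assume "k < length xs \<and> xs ! k = xs ! i"
  then show "i \<le> k" using assms by (auto simp: is_order_def nth_eq_iff_index_eq)
qed (use assms in simp)

lemma pos_less_length_nth_pos:
  assumes "is_order xs"
  shows "pos xs a < length xs \<and> xs ! pos xs a = a"
proof -
  have "\<exists>i. i < length xs \<and> xs ! i = a"
    using assms by (auto simp: is_order_def in_set_conv_nth[symmetric])
  then show ?thesis unfolding pos_def by (rule LeastI_ex)
qed

lemma top_order: "is_order (xs :: 'o::finite list) \<Longrightarrow> top xs = xs ! 0"
  using length_order[of xs] by (auto simp: top_def intro: hd_conv_nth)

lemma pos_eq_0_iff: "is_order (xs :: 'o::finite list) \<Longrightarrow> pos xs a = 0 \<longleftrightarrow> a = top xs"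
  using pos_less_length_nth_pos[of xs a] pos_nth[of xs 0] length_order[of xs]
  by (auto simp: top_order)

definition rank_weight :: "nat \<Rightarrow> nat \<Rightarrow> real" where
  "rank_weight n k = real (n - k) / (\<Sum>i<n. real (n - i))"

lemma rank_weight_normaliser_pos: "n > 0 \<Longrightarrow> (\<Sum>i<n. real (n - i)) > 0"
  by (rule sum_pos2[of _ 0]) auto

lemma rank_weight_strict_antimono: "i < k \<Longrightarrow> k < n \<Longrightarrow> rank_weight n k < rank_weight n i"
  unfolding rank_weight_def using rank_weight_normaliser_pos[of n]
  by (intro divide_strict_right_mono) auto

lemma sum_rank_weight: "n > 0 \<Longrightarrow> (\<Sum>k<n. rank_weight n k) = 1"
  using rank_weight_normaliser_pos[of n] by (simp add: rank_weight_def sum_divide_distrib[symmetric])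

definition rank_lottery :: "'o::finite list \<Rightarrow> 'o pmf" where
  "rank_lottery xs = pmf_of_list (map (\<lambda>k. (xs ! k, rank_weight CARD('o) k)) [0..<CARD('o)])"

lemma rank_lottery_wf:
  "pmf_of_list_wf (map (\<lambda>k. (xs ! k, rank_weight CARD('o::finite) k)) [0..<CARD('o)])"
proof (rule pmf_of_list_wfI)
  show "sum_list (map snd (map (\<lambda>k. (xs ! k, rank_weight CARD('o) k)) [0..<CARD('o)])) = 1"
    using sum_rank_weight[of "CARD('o)"]
    by (simp add: o_def sum_list_distinct_conv_sum_set lessThan_atLeast0)
qed (use rank_weight_normaliser_pos[of "CARD('o)"] in \<open>auto simp: rank_weight_def\<close>)

lemma pmf_rank_lottery:
  assumes "is_order (xs :: 'o::finite list)"
  shows "pmf (rank_lottery xs) a = rank_weight CARD('o) (pos xs a)"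
proof -
  let ?n = "CARD('o)"
  have "filter (\<lambda>k. xs ! k = a) [0..<?n] = filter (\<lambda>k. k = pos xs a) [0..<?n]"
    using assms pos_less_length_nth_pos[OF assms, of a] pos_nth[OF assms] length_order[OF assms]
    by (intro filter_cong) auto
  also have "\<dots> = [pos xs a]"
  proof -
    have "i < n \<Longrightarrow> filter (\<lambda>k. k = i) [0..<n] = [i]" for i n
      by (induction n) auto
    then show ?thesis using pos_less_length_nth_pos[OF assms, of a] length_order[OF assms]
      by simp
  qed
  finally show ?thesis
    unfolding rank_lottery_def pmf_pmf_of_list[OF rank_lottery_wf]
    by (simp add: filter_map o_def)
qed

lemma lex_domI:
  assumes "i < length xs" "\<And>k. k < i \<Longrightarrow> pmf p (xs ! k) = pmf q (xs ! k)"
    and "pmf q (xs ! i) < pmf p (xs ! i)"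
  shows "lex_dom xs p q"
  using assms unfolding lex_dom_def by auto

lemma first_disagreement_orders:
  fixes xs xs' :: "'o::finite list"
  assumes xs: "is_order xs" and xs': "is_order xs'" and "xs \<noteq> xs'"
  obtains k where "k < length xs" "\<And>i. i < k \<Longrightarrow> xs' ! i = xs ! i" "k < pos xs' (xs ! k)"
proof -
  have len: "length xs' = length xs" using length_order xs xs' by metis
  then have "\<exists>k. k < length xs \<and> xs ! k \<noteq> xs' ! k"
    using \<open>xs \<noteq> xs'\<close> nth_equalityI by metis
  define k where "k = (LEAST k. k < length xs \<and> xs ! k \<noteq> xs' ! k)"
  have k: "k < length xs" "xs ! k \<noteq> xs' ! k"
    using LeastI_ex[OF \<open>\<exists>k. _\<close>] unfolding k_def by blast+
  have agree: "xs' ! i = xs ! i" if "i < k" for i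
    using not_less_Least[of i] that k(1) unfolding k_def by fastforce
  define r where "r = pos xs' (xs ! k)"
  have r: "r < length xs" "xs' ! r = xs ! k"
    using pos_less_length_nth_pos[OF xs', of "xs ! k"] len unfolding r_def by auto
  have "\<not> r < k"
  proof
    assume "r < k"
    then have "xs ! r = xs ! k" using agree r(2) by simp
    then show False using xs \<open>r < k\<close> r(1) k(1) by (simp add: is_order_def nth_eq_iff_index_eq)
  qed
  moreover have "r \<noteq> k" using r(2) k(2) by auto
  ultimately show thesis using that k(1) agree unfolding r_def by simp
qed

lemma rank_lottery_shift_lex_dom:
  fixes xs xs' :: "'o::finite list" and p q :: "'o pmf"
  assumes xs: "is_order xs" and xs': "is_order xs'"
    and diff: "\<And>x. pmf p x - pmf q x =
      c * (rank_weight CARD('o) (pos xs x) - rank_weight CARD('o) (pos xs' x))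
      + d * ((if a = x then 1 else 0) - (if b = x then 1 else 0))"
    and "c > 0" "d \<ge> 0"
    and ab: "a = b \<or> (top xs \<noteq> top xs' \<and> b \<noteq> top xs)"
  shows "p = q \<or> lex_dom xs p q"
proof -
  let ?w = "rank_weight CARD('o)"
  have len: "length xs = CARD('o)" using length_order xs by metis
  have rank_gain: "c * (?w k - ?w (pos xs' (xs ! k))) > 0"
    if "k < pos xs' (xs ! k)" for k
    using rank_weight_strict_antimono[OF that] pos_less_length_nth_pos[OF xs', of "xs ! k"]
      length_order[OF xs'] \<open>c > 0\<close> by simp
  consider "a = b" "xs = xs'" | "a = b" "xs \<noteq> xs'" | "a \<noteq> b" by blast
  then show ?thesis
  proof cases
    case 1
    then show ?thesis using diff by (simp add: pmf_eqI)
  next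
    case 2
    obtain k where k: "k < length xs" "\<And>i. i < k \<Longrightarrow> xs' ! i = xs ! i"
      "k < pos xs' (xs ! k)"
      using first_disagreement_orders[OF xs xs' \<open>xs \<noteq> xs'\<close>] by blast
    have "pmf p (xs ! i) = pmf q (xs ! i)" if "i < k" for i
      using diff[of "xs ! i"] \<open>a = b\<close> that k(1) k(2)[OF that] length_order[OF xs']
        pos_nth[OF xs, of i] pos_nth[OF xs', of i] len by simp
    moreover have "pmf q (xs ! k) < pmf p (xs ! k)"
      using diff[of "xs ! k"] \<open>a = b\<close> rank_gain[OF k(3)] pos_nth[OF xs k(1)] by simp
    ultimately show ?thesis using lex_domI[OF k(1)] by blast
  next
    case 3
    with ab have tops: "top xs \<noteq> top xs'" "b \<noteq> top xs" by auto
    have "0 < pos xs' (top xs)"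
      using tops(1) pos_eq_0_iff[OF xs'] by auto
    then have "pmf q (xs ! 0) < pmf p (xs ! 0)"
      using diff[of "xs ! 0"] rank_gain[of 0] tops(2) \<open>d \<ge> 0\<close> pos_nth[OF xs, of 0] len
      by (cases "a = xs ! 0") (simp_all add: top_order[OF xs])
    then show ?thesis using lex_domI[of 0 xs] len by simp
  qed
qed

lemma top_choice_deviation:
  assumes "top_choice Sig f" "P \<in> profiles Sig" "xs' \<in> Sig j"
    and changed: "f (P(j := xs')) \<noteq> f P"
  shows "top xs' \<noteq> top (P j) \<and> f (P(j := xs')) \<noteq> top (P j)"
proof -
  obtain g where g: "\<And>P. P \<in> profiles Sig \<Longrightarrow> f P = g (\<lambda>i. top (P i))"
    and idem: "\<And>j v a b. g (v(j := a)) = b \<Longrightarrow> g (v(j := b)) = b"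
    using assms(1) unfolding top_choice_def by blast
  define v where "v = (\<lambda>i. top (P i))"
  have "P(j := xs') \<in> profiles Sig" using assms(2,3) by (auto simp: profiles_def)
  moreover have "(\<lambda>i. top ((P(j := xs')) i)) = v(j := top xs')" by (auto simp: v_def)
  ultimately have new: "f (P(j := xs')) = g (v(j := top xs'))" using g by metis
  have "v(j := top (P j)) = v" by (auto simp: v_def)
  then have old: "f P = g (v(j := top (P j)))" using g[OF assms(2)] by (simp add: v_def)
  show ?thesis
    using changed idem[OF new[symmetric]] unfolding new old by auto
qed

lemma top_choice_imp_pseudomonotone:
  assumes "valid_domain Sig" "top_choice Sig (f :: _ \<Rightarrow> 'o::finite)"
  shows "pseudomonotone Sig f"
  unfolding pseudomonotone_def Let_def
proof (intro allI ballI)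
  fix j P xs' assume P: "P \<in> profiles Sig" and xs': "xs' \<in> Sig j"
  have xs: "is_order (P j)" using assms(1) P by (auto simp: valid_domain_def profiles_def)
  have "is_order xs'" using assms(1) xs' by (auto simp: valid_domain_def)
  show "f P = f (P(j := xs')) \<or> prefers (P j) (f P) (f (P(j := xs'))) \<or>
        (\<exists>c. prefers (P j) c (f (P(j := xs'))) \<and> pos (P j) c < pos xs' c)"
  proof (cases "f (P(j := xs')) = f P")
    case False
    with top_choice_deviation[OF assms(2) P xs'] have
      "0 < pos xs' (top (P j))" "pos (P j) (top (P j)) = 0" "0 < pos (P j) (f (P(j := xs')))"
      using pos_eq_0_iff[OF xs] pos_eq_0_iff[OF \<open>is_order xs'\<close>] by (auto intro!: gr0I)
    then show ?thesis unfolding prefers_def by (intro disjI2 exI[of _ "top (P j)"]) simp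
  qed simp
qed

definition mixed_mechanism ::
  "real \<Rightarrow> (('a::finite \<Rightarrow> 'o::finite list) \<Rightarrow> 'o) \<Rightarrow> ('a \<Rightarrow> 'o list) \<Rightarrow> 'o pmf" where
  "mixed_mechanism e f P = bind_pmf (bernoulli_pmf e)
     (\<lambda>coin. if coin then bind_pmf (pmf_of_set UNIV) (\<lambda>i. rank_lottery (P i))
             else return_pmf (f P))"

lemma pmf_mixed_mechanism:
  fixes P :: "'a::finite \<Rightarrow> 'o::finite list"
  assumes "0 \<le> e" "e \<le> 1"
  shows "pmf (mixed_mechanism e f P) x =
    e * ((\<Sum>i\<in>UNIV. pmf (rank_lottery (P i)) x) / real CARD('a))
    + (1 - e) * (if f P = x then 1 else 0)"
  unfolding mixed_mechanism_def pmf_bind using assms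
  by (simp add: pmf_bind_pmf_of_set indicator_def)

lemma sum_fun_upd_diff:
  fixes g :: "'b \<Rightarrow> real" and P :: "'a::finite \<Rightarrow> 'b"
  shows "(\<Sum>i\<in>UNIV. g ((P(j := x)) i)) - (\<Sum>i\<in>UNIV. g (P i)) = g x - g (P j)"
proof -
  have "(\<Sum>i\<in>UNIV. g ((P(j := x)) i)) =
        (\<Sum>i\<in>UNIV. g (P i) + (if i = j then g x - g (P j) else 0))"
    by (rule sum.cong) auto
  then show ?thesis by (simp add: sum.distrib)
qed

lemma mixed_mechanism_eps_implements:
  fixes f :: "('a::finite \<Rightarrow> 'o::finite list) \<Rightarrow> 'o"
  assumes "0 \<le> e" "e \<le> 1" "e \<le> \<epsilon>"
  shows "eps_implements Sig \<epsilon> (mixed_mechanism e f) f"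
  unfolding eps_implements_def
proof
  fix P :: "'a \<Rightarrow> 'o list"
  have "0 \<le> e * ((\<Sum>i\<in>UNIV. pmf (rank_lottery (P i)) (f P)) / real CARD('a))"
    using assms(1) by (simp add: sum_nonneg)
  then show "1 - \<epsilon> \<le> pmf (mixed_mechanism e f P) (f P)"
    using pmf_mixed_mechanism[OF assms(1,2), of f P "f P"] assms(3) by simp
qed

lemma mixed_mechanism_lex_truthful:
  fixes Sig :: "'a::finite \<Rightarrow> 'o::finite list set"
  assumes "valid_domain Sig" "top_choice Sig f" "0 < e" "e \<le> 1"
  shows "lex_truthful Sig (mixed_mechanism e f)"
  unfolding lex_truthful_def
proof (intro allI ballI)
  fix j P xs'
  assume P: "P \<in> profiles Sig" and xs': "xs' \<in> Sig j"
  let ?M = "mixed_mechanism e f" and ?P' = "P(j := xs')"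
  have e01: "0 \<le> e" "e \<le> 1" using assms(3,4) by simp_all
  have xs: "is_order (P j)" using assms(1) P by (auto simp: valid_domain_def profiles_def)
  have "is_order xs'" using assms(1) xs' by (auto simp: valid_domain_def)
  have diff: "pmf (?M P) x - pmf (?M ?P') x =
      (e / real CARD('a)) * (rank_weight CARD('o) (pos (P j) x) - rank_weight CARD('o) (pos xs' x))
      + (1 - e) * ((if f P = x then 1 else 0) - (if f ?P' = x then 1 else 0))" for x
  proof -
    let ?S = "\<lambda>Q. \<Sum>i\<in>UNIV. pmf (rank_lottery (Q i)) x"
    have "?S P - ?S ?P' = rank_weight CARD('o) (pos (P j) x) - rank_weight CARD('o) (pos xs' x)"
      using sum_fun_upd_diff[of "\<lambda>xs. pmf (rank_lottery xs) x" P j xs']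
      by (simp add: pmf_rank_lottery[OF xs] pmf_rank_lottery[OF \<open>is_order xs'\<close>])
    moreover have "pmf (?M P) x - pmf (?M ?P') x = (e / real CARD('a)) * (?S P - ?S ?P')
      + (1 - e) * ((if f P = x then 1 else 0) - (if f ?P' = x then 1 else 0))"
      unfolding pmf_mixed_mechanism[OF e01] by (simp add: algebra_simps diff_divide_distrib)
    ultimately show ?thesis by simp
  qed
  have "f P = f ?P' \<or> (top (P j) \<noteq> top xs' \<and> f ?P' \<noteq> top (P j))"
    using top_choice_deviation[OF assms(2) P xs'] by metis
  from rank_lottery_shift_lex_dom[OF xs \<open>is_order xs'\<close> diff _ _ this] assms(3,4)
  show "?M P = ?M ?P' \<or> lex_dom (P j) (?M P) (?M ?P')" by simp
qed

theorem theorem18: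
  fixes Sig :: "'a::finite \<Rightarrow> 'o::finite list set"
    and f :: "('a \<Rightarrow> 'o list) \<Rightarrow> 'o"
  assumes "valid_domain Sig"
    and "top_choice Sig f"
  shows "pseudomonotone Sig f \<and>
         (\<forall>\<epsilon>::real. \<epsilon> > 0 \<longrightarrow>
            (\<exists>M :: ('a \<Rightarrow> 'o list) \<Rightarrow> 'o pmf. lex_truthful Sig M \<and> eps_implements Sig \<epsilon> M f))"
proof (intro conjI allI impI)
  show "pseudomonotone Sig f" using top_choice_imp_pseudomonotone assms by blast
next
  fix \<epsilon> :: real assume "\<epsilon> > 0"
  define e where "e = min \<epsilon> 1"
  have "0 < e" "e \<le> 1" "e \<le> \<epsilon>" using \<open>\<epsilon> > 0\<close> by (auto simp: e_def)
  then have "lex_truthful Sig (mixed_mechanism e f) \<and> eps_implements Sig \<epsilon> (mixed_mechanism e f) f"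
    using mixed_mechanism_lex_truthful[OF assms] mixed_mechanism_eps_implements[of e \<epsilon>]
    by simp
  then show "\<exists>M. lex_truthful Sig M \<and> eps_implements Sig \<epsilon> M f" by blast
qed

end
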